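(* Let $a_n$ denote the number of permutations of $[n]$ avoiding the vincular pattern 12–34. Then $$\liminf_{n\to\infty}\sqrt[n]{a_n/n!}\;\ge\;\frac{1}{\log 4}\approx 0.72134752.$$
   Context: A permutation $\sigma$ of $[n]$ contains the vincular pattern 12–34 if there exist indices $i<j$ with $\sigma(i)<\sigma(i+1)<\sigma(j)<\sigma(j+1)$. It avoids it otherwise. $\log$ denotes the natural logarithm. *)

theory Defs
  imports "HOL-Analysis.Analysis" "HOL-Combinatorics.Permutations"
begin

definition contains_12_34 :: "nat \<Rightarrow> (nat \<Rightarrow> nat) \<Rightarrow> bool" where
  "contains_12_34 n \<sigma> \<longleftrightarrow>
     (\<exists>i j. 1 \<le> i \<and> i < j \<and> j + 1 \<le> n \<and>
        \<sigma> i < \<sigma> (i + 1) \<and> \<sigma> (i + 1) < \<sigma> j \<and> \<sigma> j < \<sigma> (j + 1))"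

definition avoiders_12_34 :: "nat \<Rightarrow> (nat \<Rightarrow> nat) set" where
  "avoiders_12_34 n = {\<sigma>. \<sigma> permutes {1..n} \<and> \<not> contains_12_34 n \<sigma>}"

definition a_12_34 :: "nat \<Rightarrow> nat" where
  "a_12_34 n = card (avoiders_12_34 n)"

end

theory Submission
  imports Defs "HOL-Real_Asymp.Real_Asymp"
begin

text \<open>Let \<open>c\<close> be a word of length \<open>2h\<close> in which every letter occurs in both halves. List the
  positions of \<open>c\<close> by increasing letter; within a letter, first its second-half positions and
  then its first-half positions, each in decreasing order. This permutation ascends only where one
  letter gives way to the next, always from a first-half to a second-half position, so two
  ascents never form a 12-34; and once the set \<open>K\<close> of letters is known it determines \<open>c\<close>.
  Applied to \<open>c = g1 g2\<close> with \<open>g1, g2 : [h] \<rightarrow> K\<close> both onto \<open>K\<close>, this gives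
  \<open>q(K)^2 \<le> a(2h)\<close> for the number \<open>q(K)\<close> of such maps. As the \<open>q(K)\<close> sum to \<open>j^h\<close> over
  \<open>K \<subseteq> [j]\<close>, Cauchy-Schwarz gives \<open>j^(2h) \<le> 4^j a(2h)\<close>; choosing \<open>j \<approx> h / ln 2\<close> and using
  \<open>n! \<le> e n^(n+1) / e^n\<close> yields the bound.\<close>

section \<open>Sorting positions by an injective key\<close>

definition key_rank :: "nat \<Rightarrow> (nat \<Rightarrow> 'a::linorder) \<Rightarrow> nat \<Rightarrow> nat" where
  "key_rank m k v = Suc (card {w \<in> {1..m}. k w < k v})"

definition sort_perm :: "nat \<Rightarrow> (nat \<Rightarrow> 'a::linorder) \<Rightarrow> nat \<Rightarrow> nat" where
  "sort_perm m k p = (if p \<in> {1..m} then inv_into {1..m} (key_rank m k) p else p)"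

lemma key_rank_strict_mono:
  assumes "v \<in> {1..m}" "k v < k w"
  shows "key_rank m k v < key_rank m k w"
proof -
  have "{u \<in> {1..m}. k u < k v} \<subset> {u \<in> {1..m}. k u < k w}"
    using assms by auto
  then show ?thesis
    unfolding key_rank_def by (simp add: psubset_card_mono)
qed

context
  fixes m :: nat and k :: "nat \<Rightarrow> 'a::linorder"
  assumes inj_key: "inj_on k {1..m}"
begin

lemma key_rank_less_iff:
  assumes "v \<in> {1..m}" "w \<in> {1..m}"
  shows "key_rank m k v < key_rank m k w \<longleftrightarrow> k v < k w"
proof
  assume lt: "key_rank m k v < key_rank m k w"
  show "k v < k w"
  proof (rule ccontr)
    assume "\<not> k v < k w"
    then consider "k w < k v" | "k w = k v"
      by fastforce
    then show False
    proof cases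
      case 1
      then show False
        using key_rank_strict_mono[OF assms(2)] lt by fastforce
    next
      case 2
      then show False
        using inj_onD[OF inj_key 2 assms(2,1)] lt by simp
    qed
  qed
qed (rule key_rank_strict_mono[OF assms(1)])

lemma key_rank_in_range: "v \<in> {1..m} \<Longrightarrow> key_rank m k v \<in> {1..m}"
proof -
  assume v: "v \<in> {1..m}"
  have "{w \<in> {1..m}. k w < k v} \<subset> {1..m}"
    using v by blast
  then have "card {w \<in> {1..m}. k w < k v} < card {1..m}"
    by (rule psubset_card_mono[rotated]) simp
  then show ?thesis
    by (simp add: key_rank_def)
qed

lemma key_rank_bij_betw: "bij_betw (key_rank m k) {1..m} {1..m}"
proof -
  have inj: "inj_on (key_rank m k) {1..m}"
  proof (rule inj_onI)
    fix v w assume vw: "v \<in> {1..m}" "w \<in> {1..m}" "key_rank m k v = key_rank m k w"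
    then have "k v = k w"
      using key_rank_less_iff[of v w] key_rank_less_iff[of w v] by (metis less_irrefl linorder_neqE)
    then show "v = w"
      using inj_onD[OF inj_key] vw by blast
  qed
  have "key_rank m k ` {1..m} = {1..m}"
    using endo_inj_surj[OF _ _ inj] key_rank_in_range by blast
  then show ?thesis
    using inj by (simp add: bij_betw_def)
qed

lemma sort_perm_permutes: "sort_perm m k permutes {1..m}"
proof (rule bij_imp_permutes)
  show "bij_betw (sort_perm m k) {1..m} {1..m}"
    using bij_betw_inv_into[OF key_rank_bij_betw]
    by (rule bij_betw_cong[THEN iffD1, rotated]) (simp add: sort_perm_def)
qed (auto simp: sort_perm_def)

lemma key_rank_sort_perm: "p \<in> {1..m} \<Longrightarrow> key_rank m k (sort_perm m k p) = p"
  using bij_betw_inv_into_right[OF key_rank_bij_betw] by (simp add: sort_perm_def)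

lemma sort_perm_key_rank: "v \<in> {1..m} \<Longrightarrow> sort_perm m k (key_rank m k v) = v"
  using bij_betw_inv_into_left[OF key_rank_bij_betw] bij_betwE[OF key_rank_bij_betw]
  by (simp add: sort_perm_def)

lemma sort_perm_less_iff:
  assumes "p \<in> {1..m}" "q \<in> {1..m}"
  shows "k (sort_perm m k p) < k (sort_perm m k q) \<longleftrightarrow> p < q"
  using key_rank_less_iff[of "sort_perm m k p" "sort_perm m k q"] assms
    permutes_in_image[OF sort_perm_permutes] by (simp add: key_rank_sort_perm)

lemma sort_perm_consecutive:
  assumes "p \<in> {1..m}" "Suc p \<in> {1..m}" "u \<in> {1..m}"
  shows "\<not> (k (sort_perm m k p) < k u \<and> k u < k (sort_perm m k (Suc p)))"
  using sort_perm_less_iff[of p "key_rank m k u"] sort_perm_less_iff[of "key_rank m k u" "Suc p"]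
    assms key_rank_in_range sort_perm_key_rank by auto

end

lemma sort_perm_eq_imp_same_order:
  assumes "inj_on k1 {1..m}" "inj_on k2 {1..m}" "sort_perm m k1 = sort_perm m k2"
    and "v \<in> {1..m}" "w \<in> {1..m}"
  shows "k1 v < k1 w \<longleftrightarrow> k2 v < k2 w"
proof -
  let ?p = "key_rank m k1 v" and ?q = "key_rank m k1 w"
  have ranks: "?p \<in> {1..m}" "?q \<in> {1..m}"
    using key_rank_in_range[OF assms(1)] assms(4,5) by blast+
  have "sort_perm m k2 ?p = v" "sort_perm m k2 ?q = w"
    using sort_perm_key_rank[OF assms(1)] assms(3-5) by simp_all
  then show ?thesis
    using sort_perm_less_iff[OF assms(2) ranks] key_rank_less_iff[OF assms(1,4,5)] by simp
qed

section \<open>The block permutation of a word\<close>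

lemma mult_add_less_mult_add_iff:
  fixes a b m r s :: nat
  assumes "r < m" "s < m"
  shows "a * m + r < b * m + s \<longleftrightarrow> a < b \<or> a = b \<and> r < s"
proof -
  have less: "a * m + r' < b * m + s'" if "a < b" "r' < m" for a b r' s' :: nat
  proof -
    have "a * m + m \<le> b * m"
      using mult_le_mono1[of "Suc a" b m] that by simp
    then show ?thesis
      using that by linarith
  qed
  show ?thesis
    using less[of a b r s] less[of b a s r] assms by (cases a b rule: linorder_cases) auto
qed

text \<open>Within a letter, second-half positions precede first-half ones, each in decreasing order;
  the offset is below \<open>4h\<close>, so keys compare lexicographically.\<close>

definition block_key :: "nat \<Rightarrow> (nat \<Rightarrow> nat) \<Rightarrow> nat \<Rightarrow> nat" where
  "block_key h c v = c v * (4 * h) + (if v \<le> h then 4 * h - v else 2 * h - v)"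

definition block_perm :: "nat \<Rightarrow> (nat \<Rightarrow> nat) \<Rightarrow> nat \<Rightarrow> nat" where
  "block_perm h c = sort_perm (2 * h) (block_key h c)"

definition letters_in_both_halves :: "nat \<Rightarrow> (nat \<Rightarrow> nat) \<Rightarrow> bool" where
  "letters_in_both_halves h c \<longleftrightarrow>
     (\<forall>v \<in> {1..2 * h}. (\<exists>u \<in> {1..h}. c u = c v) \<and> (\<exists>u \<in> {h<..2 * h}. c u = c v))"

lemma block_key_less_iff:
  assumes "v \<in> {1..2 * h}" "w \<in> {1..2 * h}"
  shows "block_key h c v < block_key h c w \<longleftrightarrow>
    c v < c w \<or> c v = c w \<and> (h < v \<and> w \<le> h \<or> (v \<le> h \<longleftrightarrow> w \<le> h) \<and> w < v)"
proof -
  have offset: "(if x \<le> h then 4 * h - x else 2 * h - x) < 4 * h" if "x \<in> {1..2 * h}" for x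
    using that by auto
  show ?thesis
    unfolding block_key_def mult_add_less_mult_add_iff[OF offset[OF assms(1)] offset[OF assms(2)]]
    using assms by auto
qed

lemma inj_on_block_key: "inj_on (block_key h c) {1..2 * h}"
proof (rule inj_onI)
  fix v w
  assume "v \<in> {1..2 * h}" "w \<in> {1..2 * h}" "block_key h c v = block_key h c w"
  then show "v = w"
    using block_key_less_iff[of v h w c] block_key_less_iff[of w h v c] by auto
qed

lemma block_perm_permutes: "block_perm h c permutes {1..2 * h}"
  unfolding block_perm_def by (rule sort_perm_permutes[OF inj_on_block_key])

lemma letter_less_at_block_perm_ascent:
  assumes "1 \<le> p" "Suc p \<le> 2 * h" and ascent: "block_perm h c p < block_perm h c (Suc p)"
  shows "c (block_perm h c p) < c (block_perm h c (Suc p))"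
proof -
  define v w where "v = block_perm h c p" and "w = block_perm h c (Suc p)"
  have p_in: "p \<in> {1..2 * h}" "Suc p \<in> {1..2 * h}"
    using assms by auto
  have vw: "v \<in> {1..2 * h}" "w \<in> {1..2 * h}"
    unfolding v_def w_def using permutes_in_image[OF block_perm_permutes] p_in by auto
  have "block_key h c v < block_key h c w"
    using sort_perm_less_iff[OF inj_on_block_key p_in] unfolding v_def w_def block_perm_def by simp
  then show ?thesis
    using block_key_less_iff[OF vw] ascent unfolding v_def w_def by auto
qed

lemma block_perm_ascent:
  assumes c: "letters_in_both_halves h c"
    and p: "1 \<le> p" "Suc p \<le> 2 * h" and ascent: "block_perm h c p < block_perm h c (Suc p)"
  shows "block_perm h c p \<le> h \<and> h < block_perm h c (Suc p)"
proof -
  let ?key = "block_key h c"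
  define v w where "v = block_perm h c p" and "w = block_perm h c (Suc p)"
  have p_in: "p \<in> {1..2 * h}" "Suc p \<in> {1..2 * h}"
    using p by auto
  have vw: "v \<in> {1..2 * h}" "w \<in> {1..2 * h}"
    unfolding v_def w_def using permutes_in_image[OF block_perm_permutes] p_in by auto
  have "c v < c w"
    using letter_less_at_block_perm_ascent[OF p ascent] unfolding v_def w_def .
  have between: "\<not> (?key v < ?key u \<and> ?key u < ?key w)" if "u \<in> {1..2 * h}" for u
    using sort_perm_consecutive[OF inj_on_block_key p_in that]
    unfolding v_def w_def block_perm_def .
  obtain u where u: "u \<in> {1..h}" "c u = c v"
    using c vw(1) unfolding letters_in_both_halves_def by blast
  obtain u' where u': "u' \<in> {h<..2 * h}" "c u' = c w"
    using c vw(2) unfolding letters_in_both_halves_def by blast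
  have u_in: "u \<in> {1..2 * h}" and u'_in: "u' \<in> {1..2 * h}"
    using u u' by auto
  have "v \<le> h"
  proof (rule ccontr)
    assume "\<not> v \<le> h"
    then have "?key v < ?key u" "?key u < ?key w"
      using block_key_less_iff[OF vw(1) u_in] block_key_less_iff[OF u_in vw(2)] u \<open>c v < c w\<close>
      by auto
    then show False
      using between[OF u_in] by blast
  qed
  moreover have "h < w"
  proof (rule ccontr)
    assume "\<not> h < w"
    then have "?key v < ?key u'" "?key u' < ?key w"
      using block_key_less_iff[OF vw(1) u'_in] block_key_less_iff[OF u'_in vw(2)] u' \<open>c v < c w\<close>
      by auto
    then show False
      using between[OF u'_in] by blast
  qed
  ultimately show ?thesis
    unfolding v_def w_def ..
qed

lemma block_perm_avoids_12_34:
  assumes "letters_in_both_halves h c"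
  shows "\<not> contains_12_34 (2 * h) (block_perm h c)"
proof
  assume "contains_12_34 (2 * h) (block_perm h c)"
  then obtain i j where "1 \<le> i" "i < j" "j + 1 \<le> 2 * h"
    "block_perm h c i < block_perm h c (i + 1)" "block_perm h c (i + 1) < block_perm h c j"
    "block_perm h c j < block_perm h c (j + 1)"
    unfolding contains_12_34_def by blast
  then show False
    using block_perm_ascent[OF assms, of i] block_perm_ascent[OF assms, of j] by auto
qed

text \<open>The key order determines the letter order: \<open>c v < c w\<close> iff a letter boundary, i.e. a
  first-half position \<open>u\<close> followed in key order by a second-half position \<open>u'\<close>, separates
  \<open>v\<close> from \<open>w\<close>.\<close>

lemma letter_less_iff_block_key:
  assumes c: "letters_in_both_halves h c" and vw: "v \<in> {1..2 * h}" "w \<in> {1..2 * h}"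
  shows "c v < c w \<longleftrightarrow> (\<exists>u \<in> {1..h}. \<exists>u' \<in> {h<..2 * h}.
    \<not> block_key h c u < block_key h c v \<and> block_key h c u < block_key h c u' \<and>
    \<not> block_key h c w < block_key h c u')"
proof
  assume "c v < c w"
  obtain u where u: "u \<in> {1..h}" "c u = c v" "\<not> block_key h c u < block_key h c v"
  proof (cases "v \<le> h")
    case True
    then show ?thesis
      using that[of v] vw(1) by auto
  next
    case False
    obtain u where "u \<in> {1..h}" "c u = c v"
      using c vw(1) unfolding letters_in_both_halves_def by blast
    then show ?thesis
      using that[of u] block_key_less_iff[of u h v c] vw(1) False by auto
  qed
  obtain u' where u': "u' \<in> {h<..2 * h}" "c u' = c w" "\<not> block_key h c w < block_key h c u'"
  proof (cases "h < w")
    case True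
    then show ?thesis
      using that[of w] vw(2) by auto
  next
    case False
    obtain u' where "u' \<in> {h<..2 * h}" "c u' = c w"
      using c vw(2) unfolding letters_in_both_halves_def by blast
    then show ?thesis
      using that[of u'] block_key_less_iff[of w h u' c] vw(2) False by auto
  qed
  have "block_key h c u < block_key h c u'"
    using block_key_less_iff[of u h u' c] u u' \<open>c v < c w\<close> by auto
  then show "\<exists>u \<in> {1..h}. \<exists>u' \<in> {h<..2 * h}.
    \<not> block_key h c u < block_key h c v \<and> block_key h c u < block_key h c u' \<and>
    \<not> block_key h c w < block_key h c u'"
    using u u' by blast
next
  assume "\<exists>u \<in> {1..h}. \<exists>u' \<in> {h<..2 * h}.
    \<not> block_key h c u < block_key h c v \<and> block_key h c u < block_key h c u' \<and>
    \<not> block_key h c w < block_key h c u'"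
  then obtain u u' where u: "u \<in> {1..h}" and u': "u' \<in> {h<..2 * h}"
    and keys: "\<not> block_key h c u < block_key h c v" "block_key h c u < block_key h c u'"
      "\<not> block_key h c w < block_key h c u'"
    by blast
  have "c v \<le> c u" "c u < c u'" "c u' \<le> c w"
    using keys block_key_less_iff[of u h v c] block_key_less_iff[of u h u' c]
      block_key_less_iff[of w h u' c] u u' vw by auto
  then show "c v < c w"
    by linarith
qed

lemma eq_if_same_image_same_order:
  fixes B1 B2 :: "'a \<Rightarrow> nat"
  assumes image: "B1 ` A = B2 ` A"
    and order: "\<And>v w. v \<in> A \<Longrightarrow> w \<in> A \<Longrightarrow> B1 v < B1 w \<longleftrightarrow> B2 v < B2 w"
  shows "\<forall>v \<in> A. B1 v = B2 v"
proof (rule ccontr)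
  assume "\<not> (\<forall>v \<in> A. B1 v = B2 v)"
  then obtain v where v: "v \<in> A" "B1 v \<noteq> B2 v"
    and least: "\<And>w. w \<in> A \<Longrightarrow> B1 w \<noteq> B2 w \<Longrightarrow> B1 v \<le> B1 w"
    using ex_has_least_nat[of "\<lambda>v. v \<in> A \<and> B1 v \<noteq> B2 v" _ B1] by blast
  show False
  proof (cases "B2 v < B1 v")
    case True
    obtain w where "w \<in> A" "B1 w = B2 v"
      using image v(1) by (metis imageE imageI)
    then show False
      using least[of w] order[of w v] True v(1) by auto
  next
    case False
    then have "B1 v < B2 v"
      using v(2) by simp
    obtain w where "w \<in> A" "B2 w = B1 v"
      using image v(1) by (metis imageE imageI)
    then show False
      using least[of w] order[of w v] \<open>B1 v < B2 v\<close> v(1) by auto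
  qed
qed

lemma block_perm_eq_imp_letters_eq:
  assumes c1: "letters_in_both_halves h c1" and c2: "letters_in_both_halves h c2"
    and image: "c1 ` {1..2 * h} = c2 ` {1..2 * h}" and perm: "block_perm h c1 = block_perm h c2"
  shows "\<forall>v \<in> {1..2 * h}. c1 v = c2 v"
proof (rule eq_if_same_image_same_order[OF image])
  fix v w
  assume vw: "v \<in> {1..2 * h}" "w \<in> {1..2 * h}"
  have same_keys: "block_key h c1 x < block_key h c1 y \<longleftrightarrow> block_key h c2 x < block_key h c2 y"
    if "x \<in> {1..2 * h}" "y \<in> {1..2 * h}" for x y
    using sort_perm_eq_imp_same_order[OF inj_on_block_key inj_on_block_key
        perm[unfolded block_perm_def] that] .
  show "c1 v < c1 w \<longleftrightarrow> c2 v < c2 w"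
    unfolding letter_less_iff_block_key[OF c1 vw] letter_less_iff_block_key[OF c2 vw]
    by (intro bex_cong refl) (use vw in \<open>auto simp: same_keys\<close>)
qed

section \<open>Counting pairs of onto words\<close>

definition onto_words :: "nat \<Rightarrow> nat set \<Rightarrow> (nat \<Rightarrow> nat) set" where
  "onto_words h K = {g \<in> {1..h} \<rightarrow>\<^sub>E K. g ` {1..h} = K}"

definition join_words :: "nat \<Rightarrow> (nat \<Rightarrow> nat) \<Rightarrow> (nat \<Rightarrow> nat) \<Rightarrow> nat \<Rightarrow> nat" where
  "join_words h g1 g2 v = (if v \<le> h then g1 v else g2 (v - h))"

lemma image_join_words: "join_words h g1 g2 ` {1..2 * h} = g1 ` {1..h} \<union> g2 ` {1..h}"
proof -
  have "{1..2 * h} = {1..h} \<union> (\<lambda>s. s + h) ` {1..h}"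
    by auto
  moreover have "join_words h g1 g2 ` {1..h} = g1 ` {1..h}"
    by (simp add: join_words_def)
  moreover have "join_words h g1 g2 ` (\<lambda>s. s + h) ` {1..h} = g2 ` {1..h}"
    unfolding image_image by (rule image_cong) (auto simp: join_words_def)
  ultimately show ?thesis
    by (simp only: image_Un)
qed

lemma letters_in_both_halves_join_words:
  assumes "g1 ` {1..h} = g2 ` {1..h}"
  shows "letters_in_both_halves h (join_words h g1 g2)"
  unfolding letters_in_both_halves_def
proof
  fix v
  assume "v \<in> {1..2 * h}"
  then have letter: "join_words h g1 g2 v \<in> g1 ` {1..h}" "join_words h g1 g2 v \<in> g2 ` {1..h}"
    using image_join_words assms by blast+
  obtain s where "s \<in> {1..h}" "g1 s = join_words h g1 g2 v"
    using letter(1) by auto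
  then have "\<exists>u \<in> {1..h}. join_words h g1 g2 u = join_words h g1 g2 v"
    by (intro bexI[of _ s]) (auto simp: join_words_def)
  moreover obtain s' where "s' \<in> {1..h}" "g2 s' = join_words h g1 g2 v"
    using letter(2) by auto
  then have "\<exists>u \<in> {h<..2 * h}. join_words h g1 g2 u = join_words h g1 g2 v"
    by (intro bexI[of _ "s' + h"]) (auto simp: join_words_def)
  ultimately show "(\<exists>u \<in> {1..h}. join_words h g1 g2 u = join_words h g1 g2 v) \<and>
    (\<exists>u \<in> {h<..2 * h}. join_words h g1 g2 u = join_words h g1 g2 v)" ..
qed

lemma finite_avoiders_12_34: "finite (avoiders_12_34 n)"
  by (rule finite_subset[OF _ finite_permutations[of "{1..n}"]]) (auto simp: avoiders_12_34_def)

lemma inj_on_block_perm_join_words: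
  "inj_on (\<lambda>(g1, g2). block_perm h (join_words h g1 g2)) (onto_words h K \<times> onto_words h K)"
proof (rule inj_onI, clarsimp)
  fix g1 g2 g1' g2'
  assume g: "g1 \<in> onto_words h K" "g2 \<in> onto_words h K" "g1' \<in> onto_words h K" "g2' \<in> onto_words h K"
    and eq: "block_perm h (join_words h g1 g2) = block_perm h (join_words h g1' g2')"
  have "letters_in_both_halves h (join_words h g1 g2)" "letters_in_both_halves h (join_words h g1' g2')"
    "join_words h g1 g2 ` {1..2 * h} = join_words h g1' g2' ` {1..2 * h}"
    using g letters_in_both_halves_join_words image_join_words by (auto simp: onto_words_def)
  then have join_eq: "join_words h g1 g2 v = join_words h g1' g2' v" if "v \<in> {1..2 * h}" for v
    using block_perm_eq_imp_letters_eq eq that by blast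
  have "g1 s = g1' s \<and> g2 s = g2' s" if "s \<in> {1..h}" for s
  proof -
    have "s \<in> {1..2 * h}" "s + h \<in> {1..2 * h}"
      using that by auto
    with join_eq have "join_words h g1 g2 s = join_words h g1' g2' s"
      "join_words h g1 g2 (s + h) = join_words h g1' g2' (s + h)"
      by blast+
    then show ?thesis
      using that by (simp add: join_words_def)
  qed
  moreover have "g1 \<in> {1..h} \<rightarrow>\<^sub>E K" "g2 \<in> {1..h} \<rightarrow>\<^sub>E K" "g1' \<in> {1..h} \<rightarrow>\<^sub>E K" "g2' \<in> {1..h} \<rightarrow>\<^sub>E K"
    using g by (simp_all add: onto_words_def)
  ultimately show "g1 = g1' \<and> g2 = g2'"
    using PiE_ext[of g1 "{1..h}" "\<lambda>_. K" g1'] PiE_ext[of g2 "{1..h}" "\<lambda>_. K" g2'] by blast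
qed

lemma card_onto_words_squared_le: "card (onto_words h K) ^ 2 \<le> a_12_34 (2 * h)"
proof -
  let ?W = "onto_words h K"
  have "(\<lambda>(g1, g2). block_perm h (join_words h g1 g2)) ` (?W \<times> ?W) \<subseteq> avoiders_12_34 (2 * h)"
    using letters_in_both_halves_join_words block_perm_permutes block_perm_avoids_12_34
    by (auto simp: avoiders_12_34_def onto_words_def)
  then have "card (?W \<times> ?W) \<le> card (avoiders_12_34 (2 * h))"
    by (intro card_inj_on_le[OF inj_on_block_perm_join_words] finite_avoiders_12_34)
  then show ?thesis
    by (simp add: a_12_34_def card_cartesian_product power2_eq_square)
qed

lemma card_power_eq_sum_card_onto_words:
  assumes "finite L"
  shows "card L ^ h = (\<Sum>K \<in> Pow L. card (onto_words h K))"
proof -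
  have "({1..h} \<rightarrow>\<^sub>E L) = (\<Union>K \<in> Pow L. onto_words h K)"
    by (auto simp: onto_words_def PiE_def Pi_def)
  moreover have "finite (onto_words h K)" if "K \<in> Pow L" for K
    using that assms finite_subset[of K L]
    by (intro finite_subset[OF _ finite_PiE[of "{1..h}" "\<lambda>_. K"]]) (auto simp: onto_words_def)
  ultimately have "card ({1..h} \<rightarrow>\<^sub>E L) = (\<Sum>K \<in> Pow L. card (onto_words h K))"
    using assms by (simp add: card_UN_disjoint onto_words_def disjoint_iff)
  then show ?thesis
    by (simp add: card_funcsetE)
qed

lemma power_le_four_power_mult_a_12_34: "real j ^ (2 * h) \<le> 4 ^ j * real (a_12_34 (2 * h))"
proof -
  let ?q = "\<lambda>K. real (card (onto_words h K))"
  have "real j ^ (2 * h) = (\<Sum>K \<in> Pow {..<j}. ?q K)\<^sup>2"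
    using card_power_eq_sum_card_onto_words[of "{..<j}" h]
    by (simp add: power_mult mult.commute flip: of_nat_sum of_nat_power)
  also have "\<dots> \<le> (\<Sum>K \<in> Pow {..<j}. (?q K)\<^sup>2) * card (Pow {..<j})"
    by (rule sum_squared_le_sum_of_squares)
  also have "\<dots> \<le> (\<Sum>K \<in> Pow {..<j}. real (a_12_34 (2 * h))) * card (Pow {..<j})"
    using card_onto_words_squared_le by (intro mult_right_mono sum_mono) (simp_all flip: of_nat_power)
  also have "\<dots> = 4 ^ j * real (a_12_34 (2 * h))"
    by (simp add: card_Pow flip: power_mult_distrib)
  finally show ?thesis .
qed

section \<open>Monotonicity of the avoider counts\<close>

definition prepend_max :: "nat \<Rightarrow> (nat \<Rightarrow> nat) \<Rightarrow> nat \<Rightarrow> nat" where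
  "prepend_max n \<sigma> p = (if p = 1 then Suc n else if p \<in> {2..Suc n} then \<sigma> (p - 1) else p)"

lemma prepend_max_Suc: "p \<in> {1..n} \<Longrightarrow> prepend_max n \<sigma> (Suc p) = \<sigma> p"
  by (simp add: prepend_max_def)

lemma prepend_max_permutes:
  assumes \<sigma>: "\<sigma> permutes {1..n}"
  shows "prepend_max n \<sigma> permutes {1..Suc n}"
proof (rule bij_imp_permutes)
  have \<sigma>_in: "\<sigma> (p - 1) \<in> {1..n}" if "p \<in> {2..Suc n}" for p
    using that by (intro permutes_in_image[OF \<sigma>, THEN iffD2]) auto
  have inj: "inj_on (prepend_max n \<sigma>) {1..Suc n}"
  proof (rule inj_onI)
    fix p q
    assume p: "p \<in> {1..Suc n}" and q: "q \<in> {1..Suc n}"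
      and eq: "prepend_max n \<sigma> p = prepend_max n \<sigma> q"
    show "p = q"
    proof (cases "p = 1 \<or> q = 1")
      case True
      then show ?thesis
        using eq \<sigma>_in[of p] \<sigma>_in[of q] p q by (auto simp: prepend_max_def split: if_splits)
    next
      case False
      then have "\<sigma> (p - 1) = \<sigma> (q - 1)"
        using eq p q by (simp add: prepend_max_def)
      then have "p - 1 = q - 1"
        using permutes_inj[OF \<sigma>] by (simp add: inj_eq)
      then show ?thesis
        using p q by (simp add: eq_diff_iff)
    qed
  qed
  moreover have "prepend_max n \<sigma> ` {1..Suc n} \<subseteq> {1..Suc n}"
  proof (rule image_subsetI)
    fix p
    assume "p \<in> {1..Suc n}"
    then show "prepend_max n \<sigma> p \<in> {1..Suc n}"
      using \<sigma>_in[of p] by (cases "p = 1") (auto simp: prepend_max_def)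
  qed
  ultimately show "bij_betw (prepend_max n \<sigma>) {1..Suc n} {1..Suc n}"
    using endo_inj_surj[of "{1..Suc n}"] by (simp add: bij_betw_def)
qed (auto simp: prepend_max_def)

lemma prepend_max_avoids_12_34:
  assumes \<sigma>: "\<sigma> permutes {1..n}" and avoids: "\<not> contains_12_34 n \<sigma>"
  shows "\<not> contains_12_34 (Suc n) (prepend_max n \<sigma>)"
proof
  assume "contains_12_34 (Suc n) (prepend_max n \<sigma>)"
  then obtain i j where ij: "1 \<le> i" "i < j" "j + 1 \<le> Suc n"
    and pattern: "prepend_max n \<sigma> i < prepend_max n \<sigma> (i + 1)"
      "prepend_max n \<sigma> (i + 1) < prepend_max n \<sigma> j" "prepend_max n \<sigma> j < prepend_max n \<sigma> (j + 1)"
    unfolding contains_12_34_def by blast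
  show False
  proof (cases "i = 1")
    case True
    have "\<sigma> 1 \<le> n"
      using permutes_in_image[OF \<sigma>, of 1] ij by auto
    then show False
      using pattern(1) True ij by (auto simp: prepend_max_def)
  next
    case False
    define i' j' where "i' = i - 1" and "j' = j - 1"
    have ij': "i = Suc i'" "j = Suc j'" "1 \<le> i'" "i' < j'" "j' + 1 \<le> n"
      using ij False unfolding i'_def j'_def by auto
    then have "\<sigma> i' < \<sigma> (i' + 1)" "\<sigma> (i' + 1) < \<sigma> j'" "\<sigma> j' < \<sigma> (j' + 1)"
      using pattern prepend_max_Suc[of _ n \<sigma>] by simp_all
    then have "contains_12_34 n \<sigma>"
      unfolding contains_12_34_def using ij' by blast
    then show False
      using avoids by blast
  qed
qed

lemma a_12_34_mono: "m \<le> n \<Longrightarrow> a_12_34 m \<le> a_12_34 n"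
proof (induction n rule: dec_induct)
  case (step n)
  have "inj_on (prepend_max n) (avoiders_12_34 n)"
  proof (rule inj_onI)
    fix \<sigma> \<tau>
    assume "\<sigma> \<in> avoiders_12_34 n" "\<tau> \<in> avoiders_12_34 n" and eq: "prepend_max n \<sigma> = prepend_max n \<tau>"
    then have perms: "\<sigma> permutes {1..n}" "\<tau> permutes {1..n}"
      by (auto simp: avoiders_12_34_def)
    show "\<sigma> = \<tau>"
    proof
      fix p
      show "\<sigma> p = \<tau> p"
        using fun_cong[OF eq, of "Suc p"] prepend_max_Suc[of p n]
          permutes_not_in[OF perms(1)] permutes_not_in[OF perms(2)]
        by (cases "p \<in> {1..n}") simp_all
    qed
  qed
  moreover have "prepend_max n ` avoiders_12_34 n \<subseteq> avoiders_12_34 (Suc n)"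
    using prepend_max_permutes prepend_max_avoids_12_34 by (auto simp: avoiders_12_34_def)
  ultimately have "a_12_34 n \<le> a_12_34 (Suc n)"
    unfolding a_12_34_def by (intro card_inj_on_le finite_avoiders_12_34)
  then show ?case
    using step.IH by simp
qed simp

section \<open>Asymptotics\<close>

lemma exp_one_mult_power_le: "1 \<le> n \<Longrightarrow> exp 1 * real n ^ (n + 1) \<le> real (Suc n) ^ (n + 1)"
proof -
  assume n: "1 \<le> n"
  then have pos: "real n > 0"
    by simp
  have "ln (real n / real (Suc n)) \<le> real n / real (Suc n) - 1"
    using pos by (intro ln_le_minus_one) simp
  also have "\<dots> = - 1 / real (Suc n)"
    by (simp add: field_simps)
  finally have "ln (real n) - ln (real (Suc n)) \<le> - 1 / real (Suc n)"
    using pos by (simp add: ln_div)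
  then have "1 + real (n + 1) * ln (real n) \<le> real (n + 1) * ln (real (Suc n))"
    by (simp add: field_simps del: of_nat_Suc)
  then have "exp (1 + real (n + 1) * ln (real n)) \<le> exp (real (n + 1) * ln (real (Suc n)))"
    by simp
  then show ?thesis
    using pos by (simp add: exp_add ln_realpow[symmetric] del: of_nat_Suc)
qed

lemma fact_le_exp_power: "1 \<le> n \<Longrightarrow> fact n \<le> exp 1 * real n ^ (n + 1) / exp (real n)"
proof (induction n rule: dec_induct)
  case (step n)
  have "(fact (Suc n) :: real) = real (Suc n) * fact n"
    by simp
  also have "\<dots> \<le> real (Suc n) * (exp 1 * real n ^ (n + 1) / exp (real n))"
    using step.IH by (intro mult_left_mono) auto
  also have "\<dots> = real (Suc n) * (exp 1 * (exp 1 * real n ^ (n + 1)) / exp (real (Suc n)))"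
    by (simp add: exp_add)
  also have "\<dots> \<le> real (Suc n) * (exp 1 * real (Suc n) ^ (n + 1) / exp (real (Suc n)))"
    using exp_one_mult_power_le[OF step.hyps(1)] by (intro mult_left_mono divide_right_mono) auto
  also have "\<dots> = exp 1 * real (Suc n) ^ (Suc n + 1) / exp (real (Suc n))"
    by (simp del: of_nat_Suc)
  finally show ?case .
qed simp

lemma one_less_ln_4: "1 < ln (4 :: real)"
proof -
  have "exp 1 < (4 :: real)"
    using exp_le by simp
  then show ?thesis
    using ln_less_cancel_iff[of "exp 1" 4] by simp
qed

lemma ln_4_eq: "ln (4 :: real) = 2 * ln 2"
  using ln_realpow[of 2 2] by simp

lemma power_div_exp_le_a_12_34:
  assumes b: "0 < b" "b \<le> real j" and h: "2 * h \<le> n" "n \<le> 2 * h + 1"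
    and j: "real j * ln 4 \<le> real n"
  shows "b ^ (n - 1) / exp (real n) \<le> real (a_12_34 n)"
proof -
  have "1 \<le> real j"
    using b by simp
  have "b ^ (n - 1) \<le> real j ^ (n - 1)"
    using b by (intro power_mono) auto
  also have "\<dots> \<le> real j ^ (2 * h)"
    using \<open>1 \<le> real j\<close> h by (intro power_increasing) auto
  finally have "b ^ (n - 1) \<le> real j ^ (2 * h)" .
  moreover have "(4 :: real) ^ j \<le> exp (real n)"
  proof -
    have "(4 :: real) ^ j = exp (real j * ln 4)"
      by (simp add: exp_of_nat_mult)
    also have "\<dots> \<le> exp (real n)"
      using j by simp
    finally show ?thesis .
  qed
  ultimately have "b ^ (n - 1) / exp (real n) \<le> real j ^ (2 * h) / 4 ^ j"
    using b by (intro frac_le) auto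
  also have "\<dots> \<le> real (a_12_34 (2 * h))"
    using power_le_four_power_mult_a_12_34[of j h] by (simp add: field_simps)
  also have "\<dots> \<le> real (a_12_34 n)"
    using a_12_34_mono[OF h(1)] by simp
  finally show ?thesis .
qed

lemma a_12_34_lower_bound:
  assumes "4 \<le> n"
  shows "((real n - 1) / ln 4 - 1) ^ (n - 1) / exp (real n) \<le> real (a_12_34 n)"
proof (rule power_div_exp_le_a_12_34)
  define h where "h = n div 2"
  define j where "j = nat \<lfloor>real h / ln 2\<rfloor>"
  have ln_2: "0 < ln (2 :: real)" "ln (2 :: real) < 1"
    using ln_2_less_1 by auto
  show h: "2 * h \<le> n" "n \<le> 2 * h + 1"
    unfolding h_def by auto
  have "real j = of_int \<lfloor>real h / ln 2\<rfloor>"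
    unfolding j_def using ln_2 by simp
  then have j: "real h / ln 2 - 1 \<le> real j" "real j \<le> real h / ln 2"
    by linarith+
  show "0 < (real n - 1) / ln 4 - 1"
    using assms ln_4_eq ln_2 by (simp add: field_simps)
  have "(real n - 1) / ln 4 \<le> 2 * real h / ln 4"
    using h ln_4_eq ln_2 by (intro divide_right_mono) auto
  also have "\<dots> = real h / ln 2"
    using ln_4_eq by simp
  finally show "(real n - 1) / ln 4 - 1 \<le> real j"
    using j by linarith
  show "real j * ln 4 \<le> real n"
    using j ln_2 h ln_4_eq by (simp add: field_simps)
qed

text \<open>The logarithm of the \<open>n\<close>-th root of \<open>((n - 1) / ln 4 - 1)^(n - 1) / (e n^(n + 1))\<close>, which is
  a lower bound for \<open>a(n) / n!\<close>.\<close>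

definition lower_rate :: "real \<Rightarrow> real" where
  "lower_rate x = ((x - 1) * ln ((x - 1) / ln 4 - 1) - 1 - (x + 1) * ln x) / x"

lemma exp_lower_rate_le_root:
  assumes "4 \<le> n"
  shows "exp (lower_rate (real n)) \<le> root n (real (a_12_34 n) / fact n)"
proof -
  define b where "b = (real n - 1) / ln 4 - 1"
  define B where "B = b ^ (n - 1) / (exp 1 * real n ^ (n + 1))"
  have "0 < b"
    unfolding b_def using assms ln_4_eq ln_2_less_1 by (simp add: field_simps)
  then have "0 < B"
    unfolding B_def using assms by simp
  have "B = (b ^ (n - 1) / exp (real n)) / (exp 1 * real n ^ (n + 1) / exp (real n))"
    unfolding B_def by (simp add: field_simps)
  also have "\<dots> \<le> real (a_12_34 n) / fact n"
    using a_12_34_lower_bound[OF assms] fact_le_exp_power[of n] assms \<open>0 < b\<close>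
    unfolding b_def by (intro frac_le) auto
  finally have "B \<le> real (a_12_34 n) / fact n" .
  have "ln B = (real n - 1) * ln b - 1 - (real n + 1) * ln (real n)"
    unfolding B_def using \<open>0 < b\<close> assms by (simp add: ln_div ln_mult ln_realpow of_nat_diff) (simp add: algebra_simps)
  then have "exp (lower_rate (real n)) = root n B"
    unfolding lower_rate_def b_def using \<open>0 < B\<close> assms by (simp add: root_powr_inverse powr_def)
  also have "\<dots> \<le> root n (real (a_12_34 n) / fact n)"
    using \<open>B \<le> real (a_12_34 n) / fact n\<close> assms by simp
  finally show ?thesis .
qed

lemma exp_lower_rate_tendsto: "((\<lambda>n. exp (lower_rate (real n))) \<longlongrightarrow> 1 / ln 4) sequentially"
proof -
  have "((\<lambda>x::real. ((x - 1) * ln ((x - 1) / c - 1) - 1 - (x + 1) * ln x) / x)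
      \<longlongrightarrow> ln (inverse c)) at_top" if "1 < c" for c :: real
    using that by real_asymp
  from this[OF one_less_ln_4] have "(lower_rate \<longlongrightarrow> ln (1 / ln 4)) at_top"
    unfolding lower_rate_def by (simp add: inverse_eq_divide)
  then have "((\<lambda>n. exp (lower_rate (real n))) \<longlongrightarrow> exp (ln (1 / ln 4))) sequentially"
    by (intro tendsto_exp filterlim_compose[OF _ filterlim_real_sequentially])
  then show ?thesis
    using one_less_ln_4 by simp
qed

theorem proposition12:
  shows "liminf (\<lambda>n. ereal (root n (real (a_12_34 n) / fact n))) \<ge> ereal (1 / ln 4)"
proof -
  have "liminf (\<lambda>n. ereal (exp (lower_rate (real n)))) = ereal (1 / ln 4)"
    using exp_lower_rate_tendsto by (intro lim_imp_Liminf) auto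
  moreover have "liminf (\<lambda>n. ereal (exp (lower_rate (real n))))
      \<le> liminf (\<lambda>n. ereal (root n (real (a_12_34 n) / fact n)))"
    using exp_lower_rate_le_root
    by (intro Liminf_mono) (auto simp: eventually_at_top_linorder intro: exI[of _ 4])
  ultimately show ?thesis
    by simp
qed

end
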